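(* Let $n\ge 4$ and let $T$ be the one-column tableau with entries $i<j$ in $[n]$ (two rows), and suppose $T$ is a non-frozen prime tableau in $\mathrm{SSYT}(2,[n])$. Then $F_{2,n}(v_T)$ induces a split positroidal subdivision of the hypersimplex $\Delta(2,n)$, i.e. a positroidal subdivision with exactly two maximal cells.
   Context: $\mathrm{SSYT}(2,[n])$ denotes rectangular semistandard Young tableaux with $2$ rows and entries in $[n]$. A one-column tableau with entries $i<j$ is frozen if $\{i,j\}$ is a cyclic interval of $[n]$, i.e. $j=i+1$ or $(i,j)=(1,n)$; non-frozen means not frozen. Tableaux index the dual canonical basis of the Grassmannian coordinate ring $\mathbb{C}[\mathrm{Gr}(2,n)]$ (for a one-column tableau with entries $i<j$ the basis element is the Plücker coordinate $p_{ij}$); $T$ is prime if its basis element is not the product of the basis elements of two nontrivial tableaux. For $i\in[k-1]$, $j\in[n-k]$ (here $k=2$), the fundamental tableau $T_{i,j}$ is the one-column tableau with entries $[j,j+k]\setminus\{i+j\}$; every tableau is equivalent, modulo removing columns whose entries are consecutive integers, to a unique union of fundamental tableaux $\bigcup T_{i,j}^{\cup c_{i,j}}$, and $v_T=\sum c_{i,j}e_{i,j}\in\mathbb{R}^{(k-1)(n-k)}$. $F_{k,n}(y)=\sum_{J\in\binom{[n]}{k}}P_J(y)e^J$ (modulo the lineality space), where $P_J$ is the tropicalization of the Plücker coordinate $p_J$ of the Speyer–Williams web matrix, the $k\times n$ matrix parametrizing the positive Grassmannian by $(k-1)(n-k)$ positive variables, whose maximal minors are subtraction-free polynomials in these variables.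 The vector $(P_J(v_T))_J$ induces the regular subdivision of $\Delta(k,n)=\mathrm{conv}\{e_J: J\in\binom{[n]}{k}\}$ obtained by lifting $e_J$ to height $P_J(v_T)$ and projecting the lower faces; it is positroidal if all cells are matroid polytopes of positroids (matroids representable by real matrices with all maximal minors nonnegative). *)

theory Defs
  imports Complex_Main "HOL-Library.Multiset"
begin

text \<open>A two-row tableau is represented by the multisets of entries of its two rows
  (for a semistandard rectangular tableau the rows are weakly increasing, so the
  tableau is determined by these multisets). The union of tableaux is the union of
  the row contents (re-sorted), i.e. the sum of the multisets.\<close>

type_synonym tableau2 = "nat multiset \<times> nat multiset"

definition tab_union :: "tableau2 \<Rightarrow> tableau2 \<Rightarrow> tableau2" where
  "tab_union T U = (fst T + fst U, snd T + snd U)"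

definition one_col :: "nat \<Rightarrow> nat \<Rightarrow> tableau2" where
  "one_col a b = ({#a#}, {#b#})"

text \<open>Frozen one-column tableau: the entries form a cyclic interval of [n].\<close>
definition frozen :: "nat \<Rightarrow> nat \<Rightarrow> nat \<Rightarrow> bool" where
  "frozen n a b \<longleftrightarrow> b = a + 1 \<or> (a = 1 \<and> b = n)"

definition consec_cols :: "nat multiset \<Rightarrow> tableau2" where
  "consec_cols D = (D, image_mset Suc D)"

definition tab_equiv :: "nat \<Rightarrow> tableau2 \<Rightarrow> tableau2 \<Rightarrow> bool" where
  "tab_equiv n T U \<longleftrightarrow> (\<exists>D D'. set_mset D \<subseteq> {1..n-1} \<and> set_mset D' \<subseteq> {1..n-1} \<and>
      tab_union T (consec_cols D) = tab_union U (consec_cols D'))"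

text \<open>Fundamental tableau T_{1,j} for k = 2: entries [j, j+2] minus {j+1}.\<close>
definition fund_tab :: "nat \<Rightarrow> tableau2" where
  "fund_tab j = ({#j#}, {#j + 2#})"

definition fund_union :: "nat \<Rightarrow> (nat \<Rightarrow> nat) \<Rightarrow> tableau2" where
  "fund_union n c = ((\<Sum>j\<in>{1..n-2}. repeat_mset (c j) (fst (fund_tab j))),
                     (\<Sum>j\<in>{1..n-2}. repeat_mset (c j) (snd (fund_tab j))))"

text \<open>The vector v_T (coordinate j stands for e_{1,j}, j in [n-2]).\<close>
definition vT :: "nat \<Rightarrow> tableau2 \<Rightarrow> nat \<Rightarrow> real" where
  "vT n T = (\<lambda>j. real ((THE c. (\<forall>j. j \<notin> {1..n-2} \<longrightarrow> c j = 0) \<and>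
                              tab_equiv n T (fund_union n c)) j))"

text \<open>Rows of the web matrix for k = 2, in the variables x_{1,1},...,x_{1,n-2}
  (x m stands for x_{1,m}): row 1 = (1, 0, -x1, -(x1+x2), ..., -(x1+...+x_{n-2})),
  row 2 = (0, 1, 1, ..., 1).\<close>
definition web_row1 :: "(nat \<Rightarrow> real) \<Rightarrow> nat \<Rightarrow> real" where
  "web_row1 x c = (if c = 1 then 1 else if c = 2 then 0 else - (\<Sum>m\<in>{1..c-2}. x m))"

definition web_row2 :: "(nat \<Rightarrow> real) \<Rightarrow> nat \<Rightarrow> real" where
  "web_row2 x c = (if c = 1 then 0 else 1)"

definition minor2 :: "(nat \<Rightarrow> real) \<Rightarrow> (nat \<Rightarrow> real) \<Rightarrow> nat set \<Rightarrow> real" where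
  "minor2 r1 r2 J = r1 (Min J) * r2 (Max J) - r1 (Max J) * r2 (Min J)"

definition web_pl :: "nat set \<Rightarrow> (nat \<Rightarrow> real) \<Rightarrow> real" where
  "web_pl J x = minor2 (web_row1 x) (web_row2 x) J"

text \<open>Tropicalization of a subtraction-free polynomial f (valuation / min convention):
  Trop f (y) = lim_{s \<rightarrow> \<infinity>} - log f(exp(-s y)) / s  ( = min over monomials).\<close>
definition trop :: "((nat \<Rightarrow> real) \<Rightarrow> real) \<Rightarrow> (nat \<Rightarrow> real) \<Rightarrow> real" where
  "trop f y = Lim at_top (\<lambda>s. - ln (f (\<lambda>m. exp (- s * y m))) / s)"

definition tropP :: "nat set \<Rightarrow> (nat \<Rightarrow> real) \<Rightarrow> real" where
  "tropP J y = trop (web_pl J) y"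

definition hverts :: "nat \<Rightarrow> nat set set" where
  "hverts n = {J. J \<subseteq> {1..n} \<and> card J = 2}"

text \<open>A cell of the regular subdivision induced by heights h: the vertex set of a
  (nonempty) lower face of the lifted point configuration (e_J, h J).\<close>
definition reg_cell :: "nat \<Rightarrow> (nat set \<Rightarrow> real) \<Rightarrow> nat set set \<Rightarrow> bool" where
  "reg_cell n h C \<longleftrightarrow> C \<noteq> {} \<and>
     (\<exists>(w::nat \<Rightarrow> real) (c::real).
        (\<forall>J\<in>hverts n. (\<Sum>a\<in>J. w a) + c \<le> h J) \<and>
        C = {J\<in>hverts n. (\<Sum>a\<in>J. w a) + c = h J})"

definition max_cell :: "nat \<Rightarrow> (nat set \<Rightarrow> real) \<Rightarrow> nat set set \<Rightarrow> bool" where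
  "max_cell n h C \<longleftrightarrow> reg_cell n h C \<and> (\<forall>C'. reg_cell n h C' \<and> C \<subseteq> C' \<longrightarrow> C' = C)"

definition positroid_bases :: "nat \<Rightarrow> nat set set \<Rightarrow> bool" where
  "positroid_bases n C \<longleftrightarrow> (\<exists>r1 r2 :: nat \<Rightarrow> real.
      (\<forall>J\<in>hverts n. 0 \<le> minor2 r1 r2 J) \<and> C = {J\<in>hverts n. minor2 r1 r2 J \<noteq> 0})"

definition positroidal_subdiv :: "nat \<Rightarrow> (nat set \<Rightarrow> real) \<Rightarrow> bool" where
  "positroidal_subdiv n h \<longleftrightarrow> (\<forall>C. reg_cell n h C \<longrightarrow> positroid_bases n C)"

definition split_positroidal_subdiv :: "nat \<Rightarrow> (nat set \<Rightarrow> real) \<Rightarrow> bool" where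
  "split_positroidal_subdiv n h \<longleftrightarrow> positroidal_subdiv n h \<and> card {C. max_cell n h C} = 2"

end

theory Submission
  imports Defs
begin

(* For non-frozen i < j we have j \<ge> i + 2, and the column (i, j) is equivalent, modulo columns
   (m, m+1), to the union of the fundamental columns (m, m+2) with i \<le> m \<le> j - 2; so v_T is the
   indicator vector of [i, j-2]. The web-matrix minor p_{ab} is 1 for a = 1 and x_{a-1} + ... + x_{b-2}
   otherwise, so its tropicalization at v_T is 1 if {a,b} \<subseteq> S = [i+1, j] and 0 otherwise.
   This lift of \<Delta>(2,n) is the split along x(S) = 1: exchanging {s,s'} \<subseteq> S and {t,t'} outside S
   for {s,t}, {s',t'} shows that no cell contains pairs on both sides, so every cell is a face of
   one of the halves x(S) \<le> 1 and x(S) \<ge> 1. Such a face is a rank 2 matroid of a very restricted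
   shape (two parallel classes separated by an interval, or all pairs of a set that are not inside,
   resp. meet, an interval), and each of these is realized by an explicit 2 \<times> n matrix with
   nonnegative minors. Non-frozenness means that S and its complement both contain pairs, so the
   two halves are the two maximal cells. *)

section \<open>Fundamental-tableau coordinates of a column\<close>

lemma filter_mset_sum: "filter_mset P (\<Sum>j\<in>A. M j) = (\<Sum>j\<in>A. filter_mset P (M j))"
  by (induction A rule: infinite_finite_induct) auto

lemma size_filter_replicate_mset:
  "size (filter_mset P (replicate_mset k a)) = (if P a then k else 0)"
  by (induction k) auto

lemma sum_mset_singleton_shift: "(\<Sum>m\<in>{a..b}. {#m + k#}) = mset_set {a+k..b+k::nat}"
proof -
  have "(\<lambda>m. m + k) ` {a..b} = {a+k..b+k}"
    by (rule image_add_atLeastAtMost')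
  then have "(\<Sum>x\<in>{a+k..b+k}. {#x#}) = (\<Sum>m\<in>{a..b}. {#m + k#})"
    by (intro sum.reindex_cong[where l = "\<lambda>m. m + k"]) (auto simp: inj_on_def)
  then show ?thesis
    by (simp only: sum_multiset_singleton)
qed

(* A column (m, m+1) contributes 0 and the fundamental column (m, m+2) contributes 1
   exactly when m = t; so this reads off the multiplicity of T_{1,t} and is invariant under
   tab_equiv. *)
definition fund_coeff :: "nat \<Rightarrow> tableau2 \<Rightarrow> int" where
  "fund_coeff t T = int (size {#x \<in># fst T. x \<le> t#}) - int (size {#x \<in># snd T. x \<le> Suc t#})"

lemma fund_coeff_tab_union: "fund_coeff t (tab_union T U) = fund_coeff t T + fund_coeff t U"
  by (simp add: fund_coeff_def tab_union_def)

lemma fund_coeff_consec_cols: "fund_coeff t (consec_cols D) = 0"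
  by (simp add: fund_coeff_def consec_cols_def flip: image_mset_filter_mset_swap)

lemma fund_coeff_fund_union:
  assumes "\<forall>m. m \<notin> {1..n-2} \<longrightarrow> c m = 0"
  shows "fund_coeff t (fund_union n c) = int (c t)"
proof -
  have "fund_coeff t (fund_union n c)
      = (\<Sum>m\<in>{1..n-2}. int (if m \<le> t then c m else 0) - int (if m + 2 \<le> Suc t then c m else 0))"
    by (simp add: fund_coeff_def fund_union_def fund_tab_def filter_mset_sum
        size_filter_replicate_mset of_nat_sum sum_subtractf)
  also have "\<dots> = (\<Sum>m\<in>{1..n-2}. if m = t then int (c m) else 0)"
    by (intro sum.cong) auto
  also have "\<dots> = int (c t)"
    using assms by auto
  finally show ?thesis .
qed

lemma fund_coeff_tab_equiv:
  assumes "tab_equiv n T U"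
  shows "fund_coeff t T = fund_coeff t U"
proof -
  obtain D D' where "tab_union T (consec_cols D) = tab_union U (consec_cols D')"
    using assms by (auto simp: tab_equiv_def)
  then have "fund_coeff t (tab_union T (consec_cols D)) = fund_coeff t (tab_union U (consec_cols D'))"
    by (rule arg_cong)
  then show ?thesis
    by (simp only: fund_coeff_tab_union fund_coeff_consec_cols add_0_right)
qed

lemma vT_eqI:
  assumes "\<forall>m. m \<notin> {1..n-2} \<longrightarrow> c m = 0" and "tab_equiv n T (fund_union n c)"
  shows "vT n T = (\<lambda>m. real (c m))"
proof -
  have "c' = c" if "(\<forall>m. m \<notin> {1..n-2} \<longrightarrow> c' m = 0) \<and> tab_equiv n T (fund_union n c')" for c'
  proof
    fix t
    have "int (c' t) = fund_coeff t T" "int (c t) = fund_coeff t T"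
      using fund_coeff_tab_equiv[OF conjunct2[OF that]] fund_coeff_tab_equiv[OF assms(2)]
        fund_coeff_fund_union[OF conjunct1[OF that]] fund_coeff_fund_union[OF assms(1)] by simp_all
    then show "c' t = c t" by simp
  qed
  then have "(THE c. (\<forall>m. m \<notin> {1..n-2} \<longrightarrow> c m = 0) \<and> tab_equiv n T (fund_union n c)) = c"
    using assms by (intro the_equality) blast+
  then show ?thesis by (simp add: vT_def)
qed

lemma fund_union_indicator:
  assumes "1 \<le> a" "b \<le> n - 2"
  shows "fund_union n (\<lambda>m. if m \<in> {a..b} then 1 else 0) = (mset_set {a..b}, mset_set {a+2..b+2})"
proof -
  have "(\<Sum>m\<in>{1..n-2}. repeat_mset (if m \<in> {a..b} then 1 else 0) {#m + k#}) = mset_set {a+k..b+k}"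
    for k
  proof -
    have "(\<Sum>m\<in>{1..n-2}. repeat_mset (if m \<in> {a..b} then 1 else 0) {#m + k#}) = (\<Sum>m\<in>{a..b}. {#m + k#})"
      using assms by (intro sum.mono_neutral_cong_right) auto
    then show ?thesis
      by (simp only: sum_mset_singleton_shift)
  qed
  from this[of 0] this[of 2] show ?thesis
    by (simp add: fund_union_def fund_tab_def)
qed

lemma tab_equiv_one_col_fund_union:
  assumes "1 \<le> i" "i + 2 \<le> j" "j \<le> n"
  shows "tab_equiv n (one_col i j) (fund_union n (\<lambda>m. if m \<in> {i..j-2} then 1 else 0))"
proof -
  have "{#i#} + mset_set {i+1..j-2} = mset_set {i..j-2}"
    using assms by (simp add: atLeastAtMost_insertL[symmetric] del: atLeastAtMost_insertL)
  moreover have "{#j#} + image_mset Suc (mset_set {i+1..j-2}) = mset_set {i+2..j}"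
  proof -
    have "Suc ` {i+1..j-2} = {i+2..j-1}"
      using assms by (auto simp: image_Suc_atLeastAtMost)
    then have "image_mset Suc (mset_set {i+1..j-2}) = mset_set {i+2..j-1}"
      by (simp add: image_mset_mset_set)
    moreover have "{i+2..j} = insert j {i+2..j-1}"
      using assms atLeastAtMostSuc_conv[of "i+2" "j-1"] by simp
    ultimately show ?thesis
      using assms by simp
  qed
  moreover have "fund_union n (\<lambda>m. if m \<in> {i..j-2} then 1 else 0) = (mset_set {i..j-2}, mset_set {i+2..j})"
    using fund_union_indicator[of i "j - 2" n] assms by simp
  ultimately have "tab_union (one_col i j) (consec_cols (mset_set {i+1..j-2}))
      = tab_union (fund_union n (\<lambda>m. if m \<in> {i..j-2} then 1 else 0)) (consec_cols {#})"
    by (simp add: tab_union_def one_col_def consec_cols_def)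
  then show ?thesis
    using assms unfolding tab_equiv_def by (intro exI[of _ "mset_set {i+1..j-2}"] exI[of _ "{#}"]) auto
qed

lemma vT_one_col:
  assumes "1 \<le> i" "i + 2 \<le> j" "j \<le> n"
  shows "vT n (one_col i j) = (\<lambda>m. if m \<in> {i..j-2} then 1 else 0)"
proof -
  have "\<forall>m. m \<notin> {1..n-2} \<longrightarrow> (if m \<in> {i..j-2} then 1 else 0 :: nat) = 0"
    using assms by auto
  from vT_eqI[OF this tab_equiv_one_col_fund_union[OF assms]] show ?thesis
    by (simp add: fun_eq_iff)
qed

section \<open>Tropical Pluecker coordinates\<close>

lemma trop_const_one: "trop (\<lambda>x. 1) y = 0"
  by (simp add: trop_def tendsto_Lim)

lemma tendsto_neg_ln_div_exp_bounds:
  fixes f :: "real \<Rightarrow> real"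
  assumes "0 < K"
    and lower: "\<And>s. 0 < s \<Longrightarrow> exp (- s * \<mu>) \<le> f s"
    and upper: "\<And>s. 0 < s \<Longrightarrow> f s \<le> K * exp (- s * \<mu>)"
  shows "((\<lambda>s. - ln (f s) / s) \<longlongrightarrow> \<mu>) at_top"
proof (rule tendsto_sandwich)
  have f_pos: "0 < f s" if "0 < s" for s
    using lower[OF that] exp_gt_zero by (rule order_less_le_trans[rotated])
  show "\<forall>\<^sub>F s in at_top. \<mu> - ln K / s \<le> - ln (f s) / s"
    using eventually_gt_at_top[of 0]
  proof eventually_elim
    case (elim s)
    have "ln (f s) \<le> ln (K * exp (- s * \<mu>))"
      using upper[OF elim] f_pos[OF elim] by simp
    also have "\<dots> = ln K - s * \<mu>"
      using \<open>0 < K\<close> by (simp add: ln_mult)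
    finally have "(s * \<mu> - ln K) / s \<le> (- ln (f s)) / s"
      using elim by (intro divide_right_mono) auto
    then show ?case
      using elim by (simp add: diff_divide_distrib)
  qed
  show "\<forall>\<^sub>F s in at_top. - ln (f s) / s \<le> \<mu>"
    using eventually_gt_at_top[of 0]
  proof eventually_elim
    case (elim s)
    have "- s * \<mu> \<le> ln (f s)"
      using lower[OF elim] f_pos[OF elim] by (metis exp_gt_zero ln_exp ln_le_cancel_iff)
    then show ?case
      using elim by (simp add: field_simps)
  qed
  have "((\<lambda>s::real. ln K / s) \<longlongrightarrow> 0) at_top"
    by (intro tendsto_divide_0[OF tendsto_const] filterlim_at_top_imp_at_infinity filterlim_ident)
  then show "((\<lambda>s. \<mu> - ln K / s) \<longlongrightarrow> \<mu>) at_top"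
    using tendsto_diff[OF tendsto_const] by fastforce
qed (rule tendsto_const)

lemma trop_sum_vars:
  assumes "finite R" "R \<noteq> {}"
  shows "trop (\<lambda>x. \<Sum>m\<in>R. x m) y = Min (y ` R)"
proof -
  define \<mu> where "\<mu> = Min (y ` R)"
  define f where "f s = (\<Sum>m\<in>R. exp (- s * y m))" for s :: real
  have "exp (- s * \<mu>) \<le> f s" for s
  proof -
    have "\<mu> \<in> y ` R"
      using assms by (simp add: \<mu>_def)
    then obtain m0 where "m0 \<in> R" "y m0 = \<mu>"
      by blast
    then show ?thesis
      unfolding f_def using member_le_sum[of m0 R "\<lambda>m. exp (- s * y m)"] assms by simp
  qed
  moreover have "f s \<le> card R * exp (- s * \<mu>)" if "0 < s" for s
    unfolding f_def
  proof (rule sum_bounded_above)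
    fix m assume "m \<in> R"
    then have "\<mu> \<le> y m"
      using assms by (simp add: \<mu>_def)
    then show "exp (- s * y m) \<le> exp (- s * \<mu>)"
      using \<open>0 < s\<close> by simp
  qed
  moreover have "0 < real (card R)"
    using assms by (simp add: card_gt_0_iff)
  ultimately have "((\<lambda>s. - ln (f s) / s) \<longlongrightarrow> \<mu>) at_top"
    by (intro tendsto_neg_ln_div_exp_bounds[where K = "card R"])
  then show ?thesis
    by (simp add: trop_def f_def \<mu>_def tendsto_Lim)
qed

lemma Min_image_indicator:
  assumes "finite R" "R \<noteq> {}"
  shows "Min ((\<lambda>m. if m \<in> A then 1 else 0) ` R) = (if R \<subseteq> A then 1 else (0::real))"
proof (cases "R \<subseteq> A")
  case True
  then have "(\<lambda>m. if m \<in> A then 1 else 0) ` R = {1::real}"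
    using assms by auto
  then show ?thesis
    using True by simp
next
  case False
  then have "0 \<in> (\<lambda>m. if m \<in> A then 1 else 0) ` R"
    by force
  then show ?thesis
    using False assms by (intro Min_eqI) auto
qed

lemma web_pl_doubleton:
  assumes "1 \<le> a" "a < b"
  shows "web_pl {a,b} = (if a = 1 then (\<lambda>x. 1) else (\<lambda>x. \<Sum>m\<in>{a-1..b-2}. x m))"
proof (cases "a = 1")
  case True
  then show ?thesis
    using assms by (simp add: fun_eq_iff web_pl_def minor2_def web_row1_def web_row2_def max_def)
next
  case False
  have "(\<Sum>m\<in>{1..b-2}. x m) = (\<Sum>m\<in>{1..a-2}. x m) + (\<Sum>m\<in>{a-1..b-2}. x m)" for x :: "nat \<Rightarrow> real"
  proof -
    have "{1..b-2} = {1..a-2} \<union> {a-1..b-2}"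
      using assms False by auto
    then show ?thesis
      by (simp add: sum.union_disjoint ivl_disj_int)
  qed
  then show ?thesis
    using assms False by (auto simp: web_pl_def minor2_def web_row1_def web_row2_def max_def)
qed

lemma tropP_doubleton:
  assumes "1 \<le> a" "a < b"
  shows "tropP {a,b} y = (if a = 1 then 0 else Min (y ` {a-1..b-2}))"
  using assms by (simp add: tropP_def web_pl_doubleton trop_const_one trop_sum_vars)

lemma tropP_indicator:
  assumes "1 \<le> i" "1 \<le> a" "a < b"
  shows "tropP {a,b} (\<lambda>m. if m \<in> {i..j-2} then 1 else 0) = (if {a,b} \<subseteq> {i+1..j} then 1 else 0)"
proof (cases "a = 1")
  case False
  have "tropP {a,b} (\<lambda>m. if m \<in> {i..j-2} then 1 else 0)
      = Min ((\<lambda>m. if m \<in> {i..j-2} then 1 else 0) ` {a-1..b-2})"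
    using assms False by (simp add: tropP_doubleton)
  also have "\<dots> = (if {a-1..b-2} \<subseteq> {i..j-2} then 1 else 0)"
    using assms False by (intro Min_image_indicator) auto
  also have "{a-1..b-2} \<subseteq> {i..j-2} \<longleftrightarrow> {a,b} \<subseteq> {i+1..j}"
    using assms False by auto
  finally show ?thesis .
qed (use assms in \<open>simp add: tropP_doubleton\<close>)

section \<open>Rank 2 positroids\<close>

lemma hvertsE:
  assumes "J \<in> hverts n"
  obtains a b where "1 \<le> a" "a < b" "b \<le> n" "J = {a,b}"
proof -
  obtain x y where "J = {x,y}" "x \<noteq> y" "J \<subseteq> {1..n}"
    using assms by (auto simp: hverts_def card_2_iff)
  then show ?thesis
    using that[of x y] that[of y x] by (cases "x < y") (auto simp: insert_commute)
qed

lemma doubleton_in_hverts: "a \<in> {1..n} \<Longrightarrow> b \<in> {1..n} \<Longrightarrow> a \<noteq> b \<Longrightarrow> {a,b} \<in> hverts n"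
  by (auto simp: hverts_def)

lemma hverts_ballI:
  "(\<And>a b. 1 \<le> a \<Longrightarrow> a < b \<Longrightarrow> b \<le> n \<Longrightarrow> P {a,b}) \<Longrightarrow> \<forall>J\<in>hverts n. P J"
  by (metis hvertsE)

lemma hverts_Collect_cong:
  "(\<And>a b. 1 \<le> a \<Longrightarrow> a < b \<Longrightarrow> b \<le> n \<Longrightarrow> P {a,b} \<longleftrightarrow> Q {a,b}) \<Longrightarrow>
    {J \<in> hverts n. P J} = {J \<in> hverts n. Q J}"
  by (metis (lifting) hvertsE)

lemma minor2_doubleton: "a < b \<Longrightarrow> minor2 ra rb {a,b} = ra a * rb b - ra b * rb a"
  by (simp add: minor2_def max_def)

lemma positroid_basesI:
  fixes ra rb :: "nat \<Rightarrow> real"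
  assumes "\<And>a b. 1 \<le> a \<Longrightarrow> a < b \<Longrightarrow> b \<le> n \<Longrightarrow>
    0 \<le> ra a * rb b - ra b * rb a \<and> (P {a,b} \<longleftrightarrow> ra a * rb b - ra b * rb a \<noteq> 0)"
  shows "positroid_bases n {J \<in> hverts n. P J}"
  unfolding positroid_bases_def
proof (intro exI conjI)
  show "\<forall>J\<in>hverts n. 0 \<le> minor2 ra rb J"
    using assms by (intro hverts_ballI) (simp add: minor2_doubleton)
  show "{J \<in> hverts n. P J} = {J \<in> hverts n. minor2 ra rb J \<noteq> 0}"
    using assms by (intro hverts_Collect_cong) (simp add: minor2_doubleton)
qed

lemma positroid_bases_two_classes:
  assumes "X \<subseteq> {p..q}" "Y \<inter> {p..q} = {}"
  shows "positroid_bases n {J \<in> hverts n. J \<inter> X \<noteq> {} \<and> J \<inter> Y \<noteq> {}}"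
proof -
  have X: "p \<le> z \<and> z \<le> q \<and> z \<notin> Y" if "z \<in> X" for z
    using assms that by auto
  have Y: "z < p \<or> q < z" if "z \<in> Y" for z
    using assms that by auto
  show ?thesis
    apply (rule positroid_basesI[where ra = "\<lambda>z. if z \<in> X then 1 else 0"
          and rb = "\<lambda>z. if z \<in> Y then (if z < p then -1 else 1) else 0"])
    subgoal for a b
      using X[of a] X[of b] Y[of a] Y[of b]
      by (cases "a \<in> X"; cases "b \<in> X"; cases "a \<in> Y"; cases "b \<in> Y") auto
    done
qed

lemma positroid_bases_not_within_interval:
  "positroid_bases n {J \<in> hverts n. J \<subseteq> Z \<and> \<not> J \<subseteq> {p..q}}"
  by (intro positroid_basesI[where ra = "\<lambda>z. if z \<in> Z then 1 else 0"
      and rb = "\<lambda>z. if z \<in> Z then (if z \<in> {p..q} then real p else real z) else 0"]) auto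

lemma positroid_bases_meeting_interval:
  "positroid_bases n {J \<in> hverts n. J \<subseteq> Z \<and> J \<inter> {p..q} \<noteq> {}}"
  by (intro positroid_basesI[where ra = "\<lambda>z. if z \<in> Z \<and> z \<in> {p..q} then 1 else 0"
      and rb = "\<lambda>z. if z \<in> Z then (if z < p then -1 else if z \<le> q then real z else 1) else 0"]) auto

(* The vertices at which u attains its maximum over \<Delta>(2,n) \<inter> {x(T) \<le> 1}, whose vertices
   are the e_J with J not inside T, in case that maximum is 0. *)
definition cut_face :: "nat \<Rightarrow> nat set \<Rightarrow> (nat \<Rightarrow> real) \<Rightarrow> nat set set" where
  "cut_face n T u = {J \<in> hverts n. \<not> J \<subseteq> T \<and> sum u J = 0}"

lemma cut_face_nonpositive:
  fixes u :: "nat \<Rightarrow> real"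
  assumes "\<forall>a\<in>{1..n}. u a \<le> 0"
  shows "cut_face n T u = {J \<in> hverts n. J \<subseteq> {z. u z = 0} \<and> \<not> J \<subseteq> T}"
  unfolding cut_face_def
proof (rule hverts_Collect_cong)
  fix a b :: nat
  assume "1 \<le> a" "a < b" "b \<le> n"
  moreover have "u a \<le> 0" "u b \<le> 0"
    using assms \<open>1 \<le> a\<close> \<open>a < b\<close> \<open>b \<le> n\<close> by auto
  ultimately show "(\<not> {a,b} \<subseteq> T \<and> sum u {a,b} = 0) \<longleftrightarrow> ({a,b} \<subseteq> {z. u z = 0} \<and> \<not> {a,b} \<subseteq> T)"
    by auto
qed

lemma cut_face_positive_outside:
  fixes u :: "nat \<Rightarrow> real"
  assumes "a \<in> {1..n}" "a \<notin> T" "0 < u a"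
    and U: "\<forall>J\<in>hverts n. \<not> J \<subseteq> T \<longrightarrow> sum u J \<le> 0"
  shows "cut_face n T u
      = {J \<in> hverts n. J \<inter> {a} \<noteq> {} \<and> J \<inter> {b. u b = - u a} \<noteq> {}}"
  unfolding cut_face_def
proof (rule hverts_Collect_cong)
  have le: "u b \<le> - u a" if "b \<in> {1..n}" "b \<noteq> a" for b
  proof -
    have "sum u {a,b} \<le> 0"
      using U doubleton_in_hverts[of a n b] that assms(1,2) by blast
    then show ?thesis
      using that by simp
  qed
  fix x y :: nat
  assume "1 \<le> x" "x < y" "y \<le> n"
  then show "(\<not> {x,y} \<subseteq> T \<and> sum u {x,y} = 0) \<longleftrightarrow> ({x,y} \<inter> {a} \<noteq> {} \<and> {x,y} \<inter> {b. u b = - u a} \<noteq> {})"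
    using le[of x] le[of y] assms(2,3) by (cases "x = a"; cases "y = a") auto
qed

lemma cut_face_max_inside:
  fixes u :: "nat \<Rightarrow> real"
  assumes "x0 \<in> T \<inter> {1..n}" "0 < u x0" "\<And>x. x \<in> T \<inter> {1..n} \<Longrightarrow> u x \<le> u x0"
    and U: "\<forall>J\<in>hverts n. \<not> J \<subseteq> T \<longrightarrow> sum u J \<le> 0"
  shows "cut_face n T u
      = {J \<in> hverts n. J \<inter> {x \<in> T. u x = u x0} \<noteq> {} \<and> J \<inter> {y \<in> {1..n} - T. u y = - u x0} \<noteq> {}}"
  unfolding cut_face_def
proof (rule hverts_Collect_cong)
  have le: "u y \<le> - u x0" if "y \<in> {1..n} - T" for y
  proof -
    have "x0 \<noteq> y"
      using that assms(1) by auto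
    moreover have "sum u {x0,y} \<le> 0"
      using U doubleton_in_hverts[of x0 n y] that assms(1) \<open>x0 \<noteq> y\<close> by blast
    ultimately show ?thesis
      by simp
  qed
  fix x y :: nat
  assume "1 \<le> x" "x < y" "y \<le> n"
  then show "(\<not> {x,y} \<subseteq> T \<and> sum u {x,y} = 0) \<longleftrightarrow>
      ({x,y} \<inter> {x \<in> T. u x = u x0} \<noteq> {} \<and> {x,y} \<inter> {y \<in> {1..n} - T. u y = - u x0} \<noteq> {})"
    using le[of x] le[of y] assms(2) assms(3)[of x] assms(3)[of y]
    by (cases "x \<in> T"; cases "y \<in> T") auto
qed

lemma positroid_bases_cut_face_max_inside:
  fixes u :: "nat \<Rightarrow> real"
  assumes T: "T = {p..q} \<or> T = {1..n} - {p..q}"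
    and "x0 \<in> T \<inter> {1..n}" "0 < u x0" "\<And>x. x \<in> T \<inter> {1..n} \<Longrightarrow> u x \<le> u x0"
    and "\<forall>J\<in>hverts n. \<not> J \<subseteq> T \<longrightarrow> sum u J \<le> 0"
  shows "positroid_bases n (cut_face n T u)"
proof -
  define A where "A = {x \<in> T. u x = u x0}"
  define B where "B = {y \<in> {1..n} - T. u y = - u x0}"
  have face: "cut_face n T u = {J \<in> hverts n. J \<inter> A \<noteq> {} \<and> J \<inter> B \<noteq> {}}"
    unfolding A_def B_def using assms(2-5) by (rule cut_face_max_inside)
  have "A \<subseteq> T" "B \<subseteq> {1..n} - T"
    by (auto simp: A_def B_def)
  from T show ?thesis
  proof
    assume "T = {p..q}"
    then have "positroid_bases n {J \<in> hverts n. J \<inter> A \<noteq> {} \<and> J \<inter> B \<noteq> {}}"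
      using \<open>A \<subseteq> T\<close> \<open>B \<subseteq> {1..n} - T\<close> by (intro positroid_bases_two_classes[of _ p q]) blast+
    then show ?thesis
      using face by simp
  next
    assume "T = {1..n} - {p..q}"
    then have "positroid_bases n {J \<in> hverts n. J \<inter> B \<noteq> {} \<and> J \<inter> A \<noteq> {}}"
      using \<open>A \<subseteq> T\<close> \<open>B \<subseteq> {1..n} - T\<close> by (intro positroid_bases_two_classes[of _ p q]) blast+
    then show ?thesis
      using face by (simp add: conj_commute)
  qed
qed

lemma positroid_bases_cut_face:
  fixes u :: "nat \<Rightarrow> real"
  assumes T: "T = {p..q} \<or> T = {1..n} - {p..q}"
    and U: "\<forall>J\<in>hverts n. \<not> J \<subseteq> T \<longrightarrow> sum u J \<le> 0"
  shows "positroid_bases n (cut_face n T u)"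
proof (cases "\<exists>a\<in>{1..n}. 0 < u a")
  case False
  then have face: "cut_face n T u = {J \<in> hverts n. J \<subseteq> {z. u z = 0} \<and> \<not> J \<subseteq> T}"
    by (intro cut_face_nonpositive) (simp add: not_less)
  from T show ?thesis
  proof
    assume "T = {p..q}"
    then show ?thesis
      using face positroid_bases_not_within_interval by simp
  next
    assume "T = {1..n} - {p..q}"
    then have "{J \<in> hverts n. J \<subseteq> {z. u z = 0} \<and> \<not> J \<subseteq> T}
        = {J \<in> hverts n. J \<subseteq> {z. u z = 0} \<and> J \<inter> {p..q} \<noteq> {}}"
      by (auto simp: hverts_def)
    then show ?thesis
      using face positroid_bases_meeting_interval by simp
  qed
next
  case positive: True
  show ?thesis
  proof (cases "\<exists>a\<in>{1..n} - T. 0 < u a")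
    case True
    then obtain a where a: "a \<in> {1..n}" "a \<notin> T" "0 < u a"
      by blast
    then show ?thesis
      using cut_face_positive_outside[OF a U] positroid_bases_two_classes[of "{a}" a a "{b. u b = - u a}"]
      by auto
  next
    case False
    then have "T \<inter> {1..n} \<noteq> {}"
      using positive by blast
    then obtain x0 where x0: "x0 \<in> T \<inter> {1..n}" "Max (u ` (T \<inter> {1..n})) = u x0"
      by (meson finite_Int finite_atLeastAtMost obtains_MAX)
    then have max: "u x \<le> u x0" if "x \<in> T \<inter> {1..n}" for x
      using that by (metis Max_ge finite_Int finite_atLeastAtMost finite_imageI image_eqI)
    have "0 < u x0"
      using False positive max by force
    show ?thesis
      using T x0(1) \<open>0 < u x0\<close> max U by (rule positroid_bases_cut_face_max_inside)
  qed
qed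

section \<open>The split subdivision\<close>

lemma reg_cell_not_both_sides:
  assumes h: "\<forall>J\<in>hverts n. h J = (if J \<subseteq> S then 1 else 0)"
    and "reg_cell n h C" "J0 \<in> C" "J0 \<subseteq> S" "J1 \<in> C"
  shows "\<not> J1 \<subseteq> {1..n} - S"
proof
  assume "J1 \<subseteq> {1..n} - S"
  obtain w c where le: "\<forall>J\<in>hverts n. sum w J + c \<le> h J"
    and C: "C = {J \<in> hverts n. sum w J + c = h J}"
    using assms(2) unfolding reg_cell_def by blast
  have across: "w x + w y + c \<le> 0" if "x \<in> S" "y \<in> {1..n} - S" "x \<in> {1..n}" for x y
  proof -
    have "{x,y} \<in> hverts n" "x \<noteq> y"
      using that by (auto intro: doubleton_in_hverts)
    then show ?thesis
      using le h that by force
  qed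
  obtain s1 s2 where s: "1 \<le> s1" "s1 < s2" "s2 \<le> n" "J0 = {s1,s2}"
    using assms(3) C by (auto elim: hvertsE)
  obtain t1 t2 where t: "1 \<le> t1" "t1 < t2" "t2 \<le> n" "J1 = {t1,t2}"
    using assms(5) C by (auto elim: hvertsE)
  have "w s1 + w s2 + c = 1"
    using assms(3,4) s h by (auto simp: C)
  moreover have "w t1 + w t2 + c = 0"
    using assms(5) \<open>J1 \<subseteq> {1..n} - S\<close> t h by (auto simp: C)
  moreover have "w s1 + w t1 + c \<le> 0" "w s2 + w t2 + c \<le> 0"
    using across s t \<open>J0 \<subseteq> S\<close> \<open>J1 \<subseteq> {1..n} - S\<close> by auto
  ultimately show False
    by linarith
qed

lemma reg_cell_eq_cut_face:
  fixes u w :: "nat \<Rightarrow> real"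
  assumes "\<forall>J\<in>hverts n. sum w J + c \<le> h J" "C = {J \<in> hverts n. sum w J + c = h J}"
    and "\<forall>J\<in>C. \<not> J \<subseteq> T" "\<forall>J\<in>hverts n. \<not> J \<subseteq> T \<longrightarrow> sum u J = sum w J + c - h J"
  shows "\<forall>J\<in>hverts n. \<not> J \<subseteq> T \<longrightarrow> sum u J \<le> 0"
    and "C = cut_face n T u"
  using assms by (auto simp: cut_face_def)

lemma reg_cell_indicator_cut_face:
  assumes h: "\<forall>J\<in>hverts n. h J = (if J \<subseteq> S then 1 else 0)" and "reg_cell n h C"
  obtains T and u :: "nat \<Rightarrow> real" where "T = S \<or> T = {1..n} - S"
    and "\<forall>J\<in>hverts n. \<not> J \<subseteq> T \<longrightarrow> sum u J \<le> 0" and "C = cut_face n T u"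
proof -
  obtain w c where cell: "\<forall>J\<in>hverts n. sum w J + c \<le> h J" "C = {J \<in> hverts n. sum w J + c = h J}"
    using assms(2) unfolding reg_cell_def by blast
  show ?thesis
  proof (cases "\<exists>J0\<in>C. J0 \<subseteq> S")
    case True
    define u where "u a = w a + c / 2 - (if a \<in> S then 1 else 0) + 1 / 2" for a
    have "\<forall>J\<in>C. \<not> J \<subseteq> {1..n} - S"
      using True reg_cell_not_both_sides[OF h assms(2)] by blast
    moreover have "\<forall>J\<in>hverts n. \<not> J \<subseteq> {1..n} - S \<longrightarrow> sum u J = sum w J + c - h J"
    proof (intro hverts_ballI impI)
      fix a b :: nat
      assume ab: "1 \<le> a" "a < b" "b \<le> n" "\<not> {a,b} \<subseteq> {1..n} - S"
      then have "h {a,b} = (if a \<in> S \<and> b \<in> S then 1 else 0)" "a \<in> S \<or> b \<in> S"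
        using h doubleton_in_hverts[of a n b] by auto
      then show "sum u {a,b} = sum w {a,b} + c - h {a,b}"
        using ab by (auto simp: u_def)
    qed
    ultimately show ?thesis
      using reg_cell_eq_cut_face[of n w c h C "{1..n} - S" u] cell by (intro that[of "{1..n} - S" u]) auto
  next
    case False
    define u where "u a = w a + c / 2" for a
    have "\<forall>J\<in>C. \<not> J \<subseteq> S"
      using False by blast
    moreover have "\<forall>J\<in>hverts n. \<not> J \<subseteq> S \<longrightarrow> sum u J = sum w J + c - h J"
    proof (intro hverts_ballI impI)
      fix a b :: nat
      assume ab: "1 \<le> a" "a < b" "b \<le> n" "\<not> {a,b} \<subseteq> S"
      then have "h {a,b} = 0"
        using h doubleton_in_hverts[of a n b] by auto
      then show "sum u {a,b} = sum w {a,b} + c - h {a,b}"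
        using ab by (simp add: u_def)
    qed
    ultimately show ?thesis
      using reg_cell_eq_cut_face[of n w c h C S u] cell by (intro that[of S u]) auto
  qed
qed

lemma reg_cell_not_within:
  assumes "\<forall>J\<in>hverts n. h J = (if J \<subseteq> S then 1 else 0)" "J1 \<in> hverts n" "\<not> J1 \<subseteq> S"
  shows "reg_cell n h {J \<in> hverts n. \<not> J \<subseteq> S}"
  unfolding reg_cell_def using assms by (intro conjI exI[of _ "\<lambda>_. 0"] exI[of _ 0]) auto

lemma reg_cell_meeting:
  assumes h: "\<forall>J\<in>hverts n. h J = (if J \<subseteq> S then 1 else 0)" and "J0 \<in> hverts n" "J0 \<subseteq> S"
  shows "reg_cell n h {J \<in> hverts n. \<not> J \<subseteq> {1..n} - S}"
proof -
  define w :: "nat \<Rightarrow> real" where "w a = (if a \<in> S then 1 else 0)" for a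
  have "\<forall>J\<in>hverts n. sum w J - 1 \<le> h J \<and> (sum w J - 1 = h J \<longleftrightarrow> \<not> J \<subseteq> {1..n} - S)"
  proof (intro hverts_ballI)
    fix a b :: nat
    assume ab: "1 \<le> a" "a < b" "b \<le> n"
    then have "h {a,b} = (if a \<in> S \<and> b \<in> S then 1 else 0)"
      using h doubleton_in_hverts[of a n b] by auto
    then show "sum w {a,b} - 1 \<le> h {a,b} \<and> (sum w {a,b} - 1 = h {a,b} \<longleftrightarrow> \<not> {a,b} \<subseteq> {1..n} - S)"
      using ab by (auto simp: w_def)
  qed
  moreover have "J0 \<noteq> {}"
    using assms(2) by (auto simp: hverts_def)
  then have "J0 \<in> {J \<in> hverts n. \<not> J \<subseteq> {1..n} - S}"
    using assms(2,3) by blast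
  ultimately show ?thesis
    unfolding reg_cell_def by (intro conjI exI[of _ w] exI[of _ "-1"]) auto
qed

lemma card_max_cells_eq_2:
  assumes "reg_cell n h P1" "reg_cell n h P2" "\<not> P1 \<subseteq> P2" "\<not> P2 \<subseteq> P1"
    and "\<And>C. reg_cell n h C \<Longrightarrow> C \<subseteq> P1 \<or> C \<subseteq> P2"
  shows "card {C. max_cell n h C} = 2"
proof -
  have "{C. max_cell n h C} = {P1, P2}"
    using assms unfolding max_cell_def by blast
  moreover have "P1 \<noteq> P2"
    using assms(3) by auto
  ultimately show ?thesis
    by simp
qed

lemma split_positroidal_subdiv_interval_indicator:
  assumes h: "\<forall>J\<in>hverts n. h J = (if J \<subseteq> {p..q} then 1 else 0)"
    and "J0 \<in> hverts n" "J0 \<subseteq> {p..q}" and "J1 \<in> hverts n" "J1 \<inter> {p..q} = {}"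
  shows "split_positroidal_subdiv n h"
proof -
  define P1 where "P1 = {J \<in> hverts n. \<not> J \<subseteq> {p..q}}"
  define P2 where "P2 = {J \<in> hverts n. \<not> J \<subseteq> {1..n} - {p..q}}"
  have "J0 \<noteq> {}" "J1 \<noteq> {}" "J1 \<subseteq> {1..n}"
    using assms(2,4) by (auto simp: hverts_def)
  then have J1: "J1 \<in> P1 - P2" and J0: "J0 \<in> P2 - P1"
    using assms(2-5) unfolding P1_def P2_def by blast+
  have "\<not> J1 \<subseteq> {p..q}"
    using J1 by (simp add: P1_def)
  then have cells: "reg_cell n h P1" "reg_cell n h P2"
    unfolding P1_def P2_def using h assms(2-4) by (blast intro: reg_cell_not_within reg_cell_meeting)+
  have faces: "positroid_bases n C \<and> (C \<subseteq> P1 \<or> C \<subseteq> P2)" if cell: "reg_cell n h C" for C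
  proof -
    obtain T and u :: "nat \<Rightarrow> real" where T: "T = {p..q} \<or> T = {1..n} - {p..q}"
      and U: "\<forall>J\<in>hverts n. \<not> J \<subseteq> T \<longrightarrow> sum u J \<le> 0" and C: "C = cut_face n T u"
      using reg_cell_indicator_cut_face[OF h cell] by blast
    show ?thesis
      using positroid_bases_cut_face[OF T U] T by (auto simp: C P1_def P2_def cut_face_def)
  qed
  have "card {C. max_cell n h C} = 2"
    using cells J0 J1 faces by (intro card_max_cells_eq_2[of n h P1 P2]) auto
  then show ?thesis
    unfolding split_positroidal_subdiv_def positroidal_subdiv_def using faces by blast
qed

theorem theorem5p2:
  fixes n i j :: nat
  assumes "4 \<le> n" and "1 \<le> i" and "i < j" and "j \<le> n"
    and "\<not> frozen n i j"
  shows "split_positroidal_subdiv n (\<lambda>J. tropP J (vT n (one_col i j)))"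
proof -
  have "i + 2 \<le> j"
    using assms(3,5) by (auto simp: frozen_def)
  have vT: "vT n (one_col i j) = (\<lambda>m. if m \<in> {i..j-2} then 1 else 0)"
    using assms(2) \<open>i + 2 \<le> j\<close> assms(4) by (rule vT_one_col)
  have heights: "\<forall>J\<in>hverts n. tropP J (vT n (one_col i j)) = (if J \<subseteq> {i+1..j} then 1 else 0)"
    unfolding vT using assms(2) by (intro hverts_ballI tropP_indicator)
  obtain x where x: "x \<in> {2..n} - {i+1..j}"
  proof (cases "i = 1")
    case True
    then show ?thesis
      using that[of n] assms(1,4,5) by (auto simp: frozen_def)
  next
    case False
    then show ?thesis
      using that[of 2] assms(1,2) by auto
  qed
  show ?thesis
  proof (rule split_positroidal_subdiv_interval_indicator[OF heights])
    show "{i+1, j} \<in> hverts n" "{i+1, j} \<subseteq> {i+1..j}"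
      using assms(2,4) \<open>i + 2 \<le> j\<close> by (auto intro: doubleton_in_hverts)
    show "{1, x} \<in> hverts n" "{1, x} \<inter> {i+1..j} = {}"
      using assms(2) x by (auto intro: doubleton_in_hverts)
  qed
qed

end
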